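(* Let $n\ge2$ and let $X_1,\dots,X_n$ be unbounded balleans, $X=\prod_{i=1}^nX_i$. (a) If $X$ is normal, then the bornology $\mathcal B_X$ has a linearly ordered base. (b) If each $X_i$ is $\operatorname{cof}$-regular and $\mathcal B_X$ has a linearly ordered base, then $X$ is normal.
   Context: A ballean is a pair $(X,\mathcal E_X)$ where $X$ is a set and $\mathcal E_X$ is a family of subsets of $X\times X$ (entourages) such that: each $E\in\mathcal E_X$ contains the diagonal $\Delta_X$; for any $E,F\in\mathcal E_X$ there is $D\in\mathcal E_X$ with $E\circ F^{-1}\subset D$; and $\bigcup\mathcal E_X=X\times X$. For $E\in\mathcal E_X$, $x\in X$, $A\subset X$: $E[x]=\{y:(x,y)\in E\}$, $E[A]=\bigcup_{a\in A}E[a]$. $B\subset X$ is bounded if $B\subset E[x]$ for some $E\in\mathcal E_X$, $x\in X$; $\mathcal B_X$ is the family of bounded sets (bornology); $X$ is unbounded if $X\notin\mathcal B_X$. Sets $A,B$ are asymptotically disjoint if $E[A]\cap E[B]\in\mathcal B_X$ for all $E\in\mathcal E_X$; $U$ is an asymptotic neighborhood of $A$ if $E[A]\setminus U\in\mathcal B_X$ for all $E$; $X$ is normal if any two asymptotically disjoint sets have disjoint asymptotic neighborhoods. The product $\prod_{i=1}^n X_i$ has entourages $\{((x_i)_i,(y_i)_i):(x_i,y_i)\in E_i\ \forall i\}$ for $E_i\in\mathcal E_{X_i}$. A linearly ordered base of a bornology is a subfamily linearly ordered by inclusion such that each bounded set is contained in a member of it. For a poset $P$, $\operatorname{cof}(P)$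 is the least cardinality of a cofinal subset (equal to $1$ if $P$ has a largest element). A ballean $X$ is $\operatorname{cof}$-regular if $\operatorname{cof}(\mathcal E_X)=\operatorname{cof}(\mathcal B_X)$, where both families are ordered by inclusion. *)

theory Defs
  imports Main "HOL-Library.Equipollence"
begin

definition ballean :: "'a set \<Rightarrow> ('a \<times> 'a) set set \<Rightarrow> bool" where
  "ballean X Ent \<longleftrightarrow>
     (\<forall>E\<in>Ent. E \<subseteq> X \<times> X \<and> Id_on X \<subseteq> E) \<and>
     (\<forall>E\<in>Ent. \<forall>F\<in>Ent. \<exists>D\<in>Ent. E O F\<inverse> \<subseteq> D) \<and>
     \<Union>Ent = X \<times> X"

definition bornology :: "'a set \<Rightarrow> ('a \<times> 'a) set set \<Rightarrow> 'a set set" where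
  "bornology X Ent = {B. B \<subseteq> X \<and> (\<exists>E\<in>Ent. \<exists>x\<in>X. B \<subseteq> E `` {x})}"

definition unbounded :: "'a set \<Rightarrow> ('a \<times> 'a) set set \<Rightarrow> bool" where
  "unbounded X Ent \<longleftrightarrow> X \<notin> bornology X Ent"

definition asymp_disjoint :: "'a set \<Rightarrow> ('a \<times> 'a) set set \<Rightarrow> 'a set \<Rightarrow> 'a set \<Rightarrow> bool" where
  "asymp_disjoint X Ent A B \<longleftrightarrow> (\<forall>E\<in>Ent. E `` A \<inter> E `` B \<in> bornology X Ent)"

definition asymp_nbhd :: "'a set \<Rightarrow> ('a \<times> 'a) set set \<Rightarrow> 'a set \<Rightarrow> 'a set \<Rightarrow> bool" where
  "asymp_nbhd X Ent U A \<longleftrightarrow> (\<forall>E\<in>Ent. E `` A - U \<in> bornology X Ent)"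

definition normal_ballean :: "'a set \<Rightarrow> ('a \<times> 'a) set set \<Rightarrow> bool" where
  "normal_ballean X Ent \<longleftrightarrow>
     (\<forall>A B. A \<subseteq> X \<longrightarrow> B \<subseteq> X \<longrightarrow> asymp_disjoint X Ent A B \<longrightarrow>
        (\<exists>U V. U \<subseteq> X \<and> V \<subseteq> X \<and> asymp_nbhd X Ent U A \<and> asymp_nbhd X Ent V B \<and> U \<inter> V = {}))"

definition has_linear_base :: "'a set set \<Rightarrow> bool" where
  "has_linear_base \<B> \<longleftrightarrow>
     (\<exists>L\<subseteq>\<B>. (\<forall>a\<in>L. \<forall>b\<in>L. a \<subseteq> b \<or> b \<subseteq> a) \<and> (\<forall>B\<in>\<B>. \<exists>l\<in>L. B \<subseteq> l))"

definition cofinal :: "'b set set \<Rightarrow> 'b set set \<Rightarrow> bool" where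
  "cofinal C P \<longleftrightarrow> C \<subseteq> P \<and> (\<forall>p\<in>P. \<exists>c\<in>C. p \<subseteq> c)"

text \<open>C is a cofinal subset of P of least cardinality, so its cardinality is cof(P).\<close>
definition min_cofinal :: "'b set set \<Rightarrow> 'b set set \<Rightarrow> bool" where
  "min_cofinal C P \<longleftrightarrow> cofinal C P \<and> (\<forall>C'. cofinal C' P \<longrightarrow> C \<lesssim> C')"

definition same_cof :: "'b set set \<Rightarrow> 'c set set \<Rightarrow> bool" where
  "same_cof P Q \<longleftrightarrow> (\<exists>C D. min_cofinal C P \<and> min_cofinal D Q \<and> C \<approx> D)"

definition cof_regular :: "'a set \<Rightarrow> ('a \<times> 'a) set set \<Rightarrow> bool" where
  "cof_regular X Ent \<longleftrightarrow> same_cof Ent (bornology X Ent)"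

definition prod_carrier :: "nat \<Rightarrow> (nat \<Rightarrow> 'a set) \<Rightarrow> (nat \<Rightarrow> 'a) set" where
  "prod_carrier n Xs = PiE {..<n} Xs"

definition prod_ent :: "nat \<Rightarrow> (nat \<Rightarrow> 'a set) \<Rightarrow> (nat \<Rightarrow> ('a \<times> 'a) set) \<Rightarrow> ((nat \<Rightarrow> 'a) \<times> (nat \<Rightarrow> 'a)) set" where
  "prod_ent n Xs Es = {(x, y). x \<in> prod_carrier n Xs \<and> y \<in> prod_carrier n Xs \<and> (\<forall>i<n. (x i, y i) \<in> Es i)}"

definition prod_ents :: "nat \<Rightarrow> (nat \<Rightarrow> 'a set) \<Rightarrow> (nat \<Rightarrow> ('a \<times> 'a) set set) \<Rightarrow> ((nat \<Rightarrow> 'a) \<times> (nat \<Rightarrow> 'a)) set set" where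
  "prod_ents n Xs Ents = {prod_ent n Xs Es | Es. \<forall>i<n. Es i \<in> Ents i}"

end

theory Submission
  imports Defs
begin

text \<open>
  (a) Fix \<open>p \<in> X\<close>. The axis \<open>A\<close> through \<open>p\<close> in the first coordinate and the hyperplane
  \<open>C = {x. x\<^sub>0 = p\<^sub>0}\<close> are asymptotically disjoint; let \<open>U\<close>, \<open>V\<close> be disjoint asymptotic
  neighbourhoods. Every tuple \<open>E\<close> of factor entourages has tuples \<open>f E\<close>, \<open>g E\<close> whose balls at \<open>p\<close>
  absorb \<open>E[A] - U\<close> and \<open>E[C] - V\<close>. Comparing balls at \<open>p\<close> in coordinate 0 and in the other
  coordinates gives two preorders, and a point differing from \<open>p\<close> in two coordinates shows that
  \<open>F \<le>\<^sub>0 f E\<close> or \<open>E \<le>\<^sub>Y g F\<close>. This dichotomy bounds every family of tuples smaller than the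
  cofinality of the joint preorder, so transfinite recursion yields a cofinal chain of tuples;
  their balls at \<open>p\<close> form a linearly ordered base.

  (b) Let \<open>M\<close> be a cofinal subfamily of least cardinality of a linearly ordered base. It is
  infinite, and fewer than \<open>|M|\<close> bounded sets have a bounded union. By cof-regularity the
  projections of \<open>M\<close> index cofinal families of entourages of the factors, hence, as
  \<open>|M\<^sup>n| = |M|\<close>, a cofinal family \<open>e m\<close>, \<open>m \<in> M\<close>, of entourages of \<open>X\<close>. Given asymptotically
  disjoint \<open>A\<close> and \<open>C\<close>, well-order \<open>M\<close> by its cardinal order and let \<open>\<psi> \<beta>\<close> be the union of
  the bounded sets \<open>D[A] \<inter> D[C]\<close> with \<open>D \<supseteq> e \<alpha> O (e \<beta>)\<inverse>\<close>, \<open>\<alpha> \<le> \<beta>\<close>; it is bounded. Then the unions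
  of the \<open>e m[A - \<psi> m]\<close> and of the \<open>e m[C - \<psi> m]\<close> are disjoint asymptotic neighbourhoods of
  \<open>A\<close> and \<open>C\<close>.
\<close>

section \<open>Cardinality\<close>

lemma lepoll_iff_card_of_ordLeq: "A \<lesssim> B \<longleftrightarrow> (card_of A, card_of B) \<in> ordLeq"
  by (simp add: lepoll_def card_of_ordLeq[symmetric])

lemma ex_lepoll_least:
  assumes "P C"
  shows "\<exists>M. P M \<and> (\<forall>C'. P C' \<longrightarrow> M \<lesssim> C')"
proof -
  have "\<exists>r\<in>{card_of C | C. P C}. \<forall>r'\<in>{card_of C | C. P C}. (r, r') \<in> ordLeq"
    using assms exists_minim_Card_order[of "{card_of C | C. P C}"] card_of_Card_order by blast
  then show ?thesis
    unfolding lepoll_iff_card_of_ordLeq by blast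
qed

lemma infinite_Times_lepoll: "infinite M \<Longrightarrow> M \<times> M \<lesssim> M"
  using card_of_Times_same_infinite[of M] ordIso_iff_ordLeq
  unfolding lepoll_iff_card_of_ordLeq by blast

lemma lepoll_imp_surj_onto: "A \<noteq> {} \<Longrightarrow> A \<lesssim> B \<Longrightarrow> \<exists>h. h ` B = A"
  by (simp add: card_of_ordLeq2 lepoll_iff_card_of_ordLeq)

lemma PiE_lessThan_lepoll:
  assumes "infinite M"
  shows "PiE {..<k::nat} (\<lambda>_. M) \<lesssim> M"
proof (induction k)
  case 0
  obtain m where "m \<in> M"
    using assms by (metis finite.emptyI ex_in_conv)
  then show ?case
    by (intro subset_image_lepoll[of _ "\<lambda>_ _. undefined"]) auto
next
  case (Suc k)
  have "inj_on (\<lambda>f. (f(k := undefined), f k)) (PiE {..<Suc k} (\<lambda>_. M))"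
    by (intro inj_onI) (metis Pair_inject fun_upd_triv fun_upd_upd)
  moreover have "(\<lambda>f. (f(k := undefined), f k)) ` PiE {..<Suc k} (\<lambda>_. M) \<subseteq> PiE {..<k} (\<lambda>_. M) \<times> M"
    by (auto simp: PiE_def Pi_def extensional_def)
  ultimately have "PiE {..<Suc k} (\<lambda>_. M) \<lesssim> PiE {..<k} (\<lambda>_. M) \<times> M"
    unfolding lepoll_def by blast
  also have "\<dots> \<lesssim> M \<times> M"
    using Suc times_lepoll_mono by blast
  also have "\<dots> \<lesssim> M"
    using infinite_Times_lepoll[OF assms] .
  finally show ?case .
qed

lemma card_of_underS_total:
  "a \<in> M \<Longrightarrow> b \<in> M \<Longrightarrow> a = b \<or> a \<in> underS (card_of M) b \<or> b \<in> underS (card_of M) a"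
  using card_of_Well_order[of M]
  unfolding well_order_on_def linear_order_on_def total_on_def underS_def
  by (auto simp: Field_card_of)

lemma underS_card_of_subset: "underS (card_of M) a \<subseteq> M"
  using underS_Field[of _ "card_of M"] by (auto simp: Field_card_of)

lemma not_lepoll_insert_image_underS:
  assumes "infinite M" "a \<in> M"
  shows "\<not> M \<lesssim> insert x (h ` underS (card_of M) a)"
proof
  let ?U = "underS (card_of M) a"
  assume "M \<lesssim> insert x (h ` ?U)"
  moreover have "insert x (h ` ?U) \<lesssim> insert a ?U"
    by (rule subset_image_lepoll[of _ "\<lambda>y. if y = a then x else h y"]) (auto simp: underS_def)
  ultimately have M: "M \<lesssim> insert a ?U"
    by (rule lepoll_trans)
  have "\<not> M \<lesssim> ?U"
    using card_of_underS[OF card_of_Card_order, of a M] assms(2) not_ordLess_ordLeq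
    unfolding lepoll_iff_card_of_ordLeq by (auto simp: Field_card_of)
  then have "finite ?U"
    using lepoll_trans2[OF M infinite_insert_eqpoll] by blast
  moreover obtain g where "M \<subseteq> g ` insert a ?U"
    using M unfolding lepoll_iff by blast
  ultimately show False
    using assms(1) finite_subset by blast
qed

section \<open>Balleans and bornologies\<close>

lemma ballean_subset: "ballean X Ent \<Longrightarrow> E \<in> Ent \<Longrightarrow> E \<subseteq> X \<times> X"
  unfolding ballean_def by blast

lemma ballean_refl: "ballean X Ent \<Longrightarrow> E \<in> Ent \<Longrightarrow> x \<in> X \<Longrightarrow> (x, x) \<in> E"
  unfolding ballean_def by auto

lemma ballean_pair: "ballean X Ent \<Longrightarrow> x \<in> X \<Longrightarrow> y \<in> X \<Longrightarrow> \<exists>E\<in>Ent. (x, y) \<in> E"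
  unfolding ballean_def by (metis SigmaI UnionE)

lemma ballean_nonempty: "ballean X Ent \<Longrightarrow> X \<noteq> {} \<Longrightarrow> Ent \<noteq> {}"
  unfolding ballean_def by blast

lemma ballean_relcomp_converse:
  "ballean X Ent \<Longrightarrow> E \<in> Ent \<Longrightarrow> F \<in> Ent \<Longrightarrow> \<exists>D\<in>Ent. E O F\<inverse> \<subseteq> D"
  unfolding ballean_def by blast

lemma ballean_converse:
  assumes b: "ballean X Ent" and F: "F \<in> Ent"
  shows "\<exists>D\<in>Ent. F\<inverse> \<subseteq> D"
proof -
  have "F\<inverse> \<subseteq> F O F\<inverse>"
  proof
    fix p assume "p \<in> F\<inverse>"
    then obtain a c where p: "p = (a, c)" "(c, a) \<in> F"
      by blast
    then have "(a, a) \<in> F"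
      using ballean_refl[OF b F] ballean_subset[OF b F] by blast
    with p show "p \<in> F O F\<inverse>"
      by blast
  qed
  then show ?thesis
    using ballean_relcomp_converse[OF b F F] by blast
qed

lemma ballean_relcomp:
  assumes b: "ballean X Ent" and E: "E \<in> Ent" and F: "F \<in> Ent"
  shows "\<exists>D\<in>Ent. E O F \<subseteq> D"
proof -
  obtain F' where "F' \<in> Ent" "F\<inverse> \<subseteq> F'"
    using ballean_converse[OF b F] by blast
  moreover from this(1) obtain D where "D \<in> Ent" "E O F'\<inverse> \<subseteq> D"
    using ballean_relcomp_converse[OF b E] by blast
  ultimately show ?thesis
    by blast
qed

lemma ballean_Un:
  assumes b: "ballean X Ent" and E: "E \<in> Ent" and F: "F \<in> Ent"
  shows "\<exists>D\<in>Ent. E \<union> F \<subseteq> D"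
proof -
  have "(a, c) \<in> E O F" if "(a, c) \<in> E \<union> F" for a c
  proof (cases "(a, c) \<in> E")
    case True
    then have "(c, c) \<in> F"
      using ballean_refl[OF b F] ballean_subset[OF b E] by blast
    with True show ?thesis
      by (rule relcompI)
  next
    case False
    then have "(a, c) \<in> F"
      using that by blast
    moreover have "(a, a) \<in> E"
      using ballean_refl[OF b E] ballean_subset[OF b F] \<open>(a, c) \<in> F\<close> by blast
    ultimately show ?thesis
      by (blast intro: relcompI)
  qed
  then have "E \<union> F \<subseteq> E O F"
    by auto
  then show ?thesis
    using ballean_relcomp[OF b E F] by blast
qed

lemma boundedI: "B \<subseteq> X \<Longrightarrow> E \<in> Ent \<Longrightarrow> x \<in> X \<Longrightarrow> B \<subseteq> E `` {x} \<Longrightarrow> B \<in> bornology X Ent"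
  unfolding bornology_def by blast

lemma bounded_subset: "B \<in> bornology X Ent \<Longrightarrow> C \<subseteq> B \<Longrightarrow> C \<in> bornology X Ent"
  unfolding bornology_def by blast

lemma ball_bounded: "ballean X Ent \<Longrightarrow> E \<in> Ent \<Longrightarrow> x \<in> X \<Longrightarrow> E `` {x} \<in> bornology X Ent"
  unfolding bornology_def using ballean_subset by blast

lemma singleton_bounded:
  assumes b: "ballean X Ent" and x: "x \<in> X"
  shows "{x} \<in> bornology X Ent"
proof -
  obtain E where "E \<in> Ent" "(x, x) \<in> E"
    using ballean_pair[OF b x x] by blast
  then show ?thesis
    using bounded_subset[OF ball_bounded[OF b _ x]] by blast
qed

lemma bounded_subset_ball:
  assumes b: "ballean X Ent" and "B \<in> bornology X Ent" "p \<in> X"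
  shows "\<exists>E\<in>Ent. B \<subseteq> E `` {p}"
proof -
  obtain E x where E: "E \<in> Ent" "x \<in> X" "B \<subseteq> E `` {x}"
    using assms(2) unfolding bornology_def by blast
  obtain F where "F \<in> Ent" "(p, x) \<in> F"
    using ballean_pair[OF b \<open>p \<in> X\<close> E(2)] by blast
  moreover obtain D where "D \<in> Ent" "F O E \<subseteq> D"
    using ballean_relcomp[OF b \<open>F \<in> Ent\<close> E(1)] by blast
  ultimately show ?thesis
    using E(3) by blast
qed

lemma Image_bounded:
  assumes b: "ballean X Ent" and "B \<in> bornology X Ent" "E \<in> Ent"
  shows "E `` B \<in> bornology X Ent"
proof -
  obtain F x where F: "F \<in> Ent" "x \<in> X" "B \<subseteq> F `` {x}"
    using assms(2) unfolding bornology_def by blast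
  obtain D where "D \<in> Ent" "F O E \<subseteq> D"
    using ballean_relcomp[OF b F(1) \<open>E \<in> Ent\<close>] by blast
  then have "E `` B \<subseteq> D `` {x}"
    using F(3) by blast
  then show ?thesis
    using ball_bounded[OF b \<open>D \<in> Ent\<close> F(2)] bounded_subset by blast
qed

lemma unbounded_ex_ball_not_subset:
  assumes b: "ballean X Ent" and "unbounded X Ent" "E \<in> Ent" "x \<in> X"
  shows "\<exists>F\<in>Ent. \<not> F `` {x} \<subseteq> E `` {x}"
proof -
  obtain y where "y \<in> X" "y \<notin> E `` {x}"
    using assms unfolding unbounded_def bornology_def by blast
  then show ?thesis
    using ballean_pair[OF b \<open>x \<in> X\<close>] by blast
qed

lemma bornology_empty: "bornology {} Ent = {}"
  unfolding bornology_def by blast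

lemma normal_ballean_empty: "normal_ballean {} Ent"
  unfolding normal_ballean_def asymp_disjoint_def asymp_nbhd_def bornology_empty by blast

section \<open>Finite products of balleans\<close>

lemma mem_prod_ent_iff:
  "(x, y) \<in> prod_ent n Xs Es \<longleftrightarrow>
     x \<in> prod_carrier n Xs \<and> y \<in> prod_carrier n Xs \<and> (\<forall>i<n. (x i, y i) \<in> Es i)"
  unfolding prod_ent_def by simp

lemma mem_prod_ents_iff:
  "E \<in> prod_ents n Xs Ents \<longleftrightarrow> (\<exists>Es. (\<forall>i<n. Es i \<in> Ents i) \<and> E = prod_ent n Xs Es)"
  unfolding prod_ents_def by blast

lemma prod_carrier_nth: "x \<in> prod_carrier n Xs \<Longrightarrow> i < n \<Longrightarrow> x i \<in> Xs i"
  unfolding prod_carrier_def by auto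

lemma prod_carrier_fun_upd:
  "p \<in> prod_carrier n Xs \<Longrightarrow> i < n \<Longrightarrow> z \<in> Xs i \<Longrightarrow> p(i := z) \<in> prod_carrier n Xs"
  unfolding prod_carrier_def by (auto simp: PiE_def Pi_def extensional_def)

lemma prod_ent_mono: "(\<And>i. i < n \<Longrightarrow> Es i \<subseteq> Fs i) \<Longrightarrow> prod_ent n Xs Es \<subseteq> prod_ent n Xs Fs"
  unfolding prod_ent_def by blast

lemma prod_ent_memI:
  assumes "\<forall>i<n. ballean (Xs i) (Ents i)" "\<forall>i<n. Es i \<in> Ents i"
    and "x \<in> prod_carrier n Xs" "y \<in> prod_carrier n Xs"
    and "\<And>i. i < n \<Longrightarrow> x i = y i \<or> (x i, y i) \<in> Es i"
  shows "(x, y) \<in> prod_ent n Xs Es"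
  using assms ballean_refl prod_carrier_nth unfolding mem_prod_ent_iff by metis

lemma prod_ent_subset: "prod_ent n Xs Es \<subseteq> prod_carrier n Xs \<times> prod_carrier n Xs"
  unfolding prod_ent_def by auto

lemma prod_ent_relcomp_converse:
  "(\<And>i. i < n \<Longrightarrow> Es i O (Fs i)\<inverse> \<subseteq> Ds i) \<Longrightarrow>
    prod_ent n Xs Es O (prod_ent n Xs Fs)\<inverse> \<subseteq> prod_ent n Xs Ds"
  by (fastforce simp: mem_prod_ent_iff)

lemma ballean_prod:
  assumes b: "\<forall>i<n. ballean (Xs i) (Ents i)"
  shows "ballean (prod_carrier n Xs) (prod_ents n Xs Ents)"
proof -
  have "E \<subseteq> prod_carrier n Xs \<times> prod_carrier n Xs \<and> Id_on (prod_carrier n Xs) \<subseteq> E"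
    if E: "E \<in> prod_ents n Xs Ents" for E
  proof -
    obtain Es where "\<forall>i<n. Es i \<in> Ents i" and "E = prod_ent n Xs Es"
      using E unfolding mem_prod_ents_iff by blast
    moreover have "Id_on (prod_carrier n Xs) \<subseteq> prod_ent n Xs Es"
      using prod_ent_memI[OF b \<open>\<forall>i<n. Es i \<in> Ents i\<close>] by auto
    ultimately show ?thesis
      using prod_ent_subset by blast
  qed
  moreover have "\<exists>D\<in>prod_ents n Xs Ents. E O F\<inverse> \<subseteq> D"
    if EF: "E \<in> prod_ents n Xs Ents" "F \<in> prod_ents n Xs Ents" for E F
  proof -
    obtain Es Fs where Es: "\<forall>i<n. Es i \<in> Ents i" "E = prod_ent n Xs Es"
      and Fs: "\<forall>i<n. Fs i \<in> Ents i" "F = prod_ent n Xs Fs"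
      using EF unfolding mem_prod_ents_iff by blast
    have "\<exists>D\<in>Ents i. Es i O (Fs i)\<inverse> \<subseteq> D" if "i < n" for i
      using ballean_relcomp_converse[of "Xs i" "Ents i" "Es i" "Fs i"] b Es(1) Fs(1) that by blast
    then obtain Ds where Ds: "\<forall>i<n. Ds i \<in> Ents i \<and> Es i O (Fs i)\<inverse> \<subseteq> Ds i"
      by metis
    then have "prod_ent n Xs Ds \<in> prod_ents n Xs Ents"
      unfolding mem_prod_ents_iff by blast
    moreover have "E O F\<inverse> \<subseteq> prod_ent n Xs Ds"
      unfolding Es(2) Fs(2) using Ds by (intro prod_ent_relcomp_converse) simp
    ultimately show ?thesis
      by blast
  qed
  moreover have "(x, y) \<in> \<Union> (prod_ents n Xs Ents)"
    if xy: "x \<in> prod_carrier n Xs" "y \<in> prod_carrier n Xs" for x y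
  proof -
    have "\<exists>E\<in>Ents i. (x i, y i) \<in> E" if "i < n" for i
      using ballean_pair[of "Xs i" "Ents i" "x i" "y i"] b xy prod_carrier_nth that by blast
    then obtain Es where Es: "\<forall>i<n. Es i \<in> Ents i \<and> (x i, y i) \<in> Es i"
      by metis
    then have "prod_ent n Xs Es \<in> prod_ents n Xs Ents"
      unfolding mem_prod_ents_iff by blast
    moreover have "(x, y) \<in> prod_ent n Xs Es"
      using xy Es unfolding mem_prod_ent_iff by blast
    ultimately show ?thesis
      by blast
  qed
  ultimately show ?thesis
    unfolding ballean_def by blast
qed

lemma prod_bounded_projection:
  assumes "B \<in> bornology (prod_carrier n Xs) (prod_ents n Xs Ents)" "i < n"
  shows "(\<lambda>x. x i) ` B \<in> bornology (Xs i) (Ents i)"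
proof -
  obtain Es x where Es: "\<forall>i<n. Es i \<in> Ents i" and x: "x \<in> prod_carrier n Xs"
    and B: "B \<subseteq> prod_ent n Xs Es `` {x}"
    using assms(1) by (auto simp: bornology_def mem_prod_ents_iff)
  have "y i \<in> Xs i \<and> y i \<in> Es i `` {x i}" if "y \<in> B" for y
  proof -
    have "(x, y) \<in> prod_ent n Xs Es"
      using that B by blast
    then show ?thesis
      using assms(2) prod_carrier_nth unfolding mem_prod_ent_iff by blast
  qed
  then have "(\<lambda>x. x i) ` B \<subseteq> Xs i" "(\<lambda>x. x i) ` B \<subseteq> Es i `` {x i}"
    by auto
  moreover have "Es i \<in> Ents i" "x i \<in> Xs i"
    using Es x assms(2) prod_carrier_nth by auto
  ultimately show ?thesis
    by (blast intro: boundedI)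
qed

lemma ex_entourage_tuple:
  assumes "\<forall>i<n. ballean (Xs i) (Ents i)" "p \<in> prod_carrier n Xs"
  shows "\<exists>Es. \<forall>i<n. Es i \<in> Ents i"
proof -
  have "\<exists>E. E \<in> Ents i" if "i < n" for i
    using ballean_nonempty[of "Xs i" "Ents i"] assms prod_carrier_nth[of p n Xs i] that by blast
  then show ?thesis
    by metis
qed

lemma prod_bounded_embedding:
  assumes b: "\<forall>i<n. ballean (Xs i) (Ents i)"
    and p: "p \<in> prod_carrier n Xs" and "i < n" and q: "q \<in> bornology (Xs i) (Ents i)"
  shows "(\<lambda>z. p(i := z)) ` q \<in> bornology (prod_carrier n Xs) (prod_ents n Xs Ents)"
proof -
  obtain F where F: "F \<in> Ents i" "q \<subseteq> F `` {p i}"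
    using bounded_subset_ball[of "Xs i" "Ents i" q "p i"] q b \<open>i < n\<close> prod_carrier_nth[OF p] by blast
  obtain Es where "\<forall>j<n. Es j \<in> Ents j"
    using ex_entourage_tuple[OF b p] by blast
  then have Fs: "\<forall>j<n. (Es(i := F)) j \<in> Ents j"
    using F(1) by simp
  have "p(i := z) \<in> prod_ent n Xs (Es(i := F)) `` {p}" if "z \<in> q" for z
  proof -
    have "z \<in> Xs i" "(p i, z) \<in> F"
      using q that F(2) unfolding bornology_def by blast+
    then have "(p, p(i := z)) \<in> prod_ent n Xs (Es(i := F))"
      by (intro prod_ent_memI[OF b Fs p prod_carrier_fun_upd[OF p \<open>i < n\<close>]]) auto
    then show ?thesis
      by blast
  qed
  then have "(\<lambda>z. p(i := z)) ` q \<subseteq> prod_ent n Xs (Es(i := F)) `` {p}"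
    by blast
  moreover have "prod_ent n Xs (Es(i := F)) \<in> prod_ents n Xs Ents"
    using Fs unfolding mem_prod_ents_iff by blast
  ultimately show ?thesis
    using bounded_subset[OF ball_bounded[OF ballean_prod[OF b] _ p]] by blast
qed

lemma unbounded_prod:
  assumes "prod_carrier n Xs \<noteq> {}" "i < n" "unbounded (Xs i) (Ents i)"
  shows "unbounded (prod_carrier n Xs) (prod_ents n Xs Ents)"
  unfolding unbounded_def
proof
  obtain p where p: "p \<in> prod_carrier n Xs"
    using assms(1) by blast
  have Xs: "Xs i \<subseteq> (\<lambda>x. x i) ` prod_carrier n Xs"
  proof
    fix z assume "z \<in> Xs i"
    then show "z \<in> (\<lambda>x. x i) ` prod_carrier n Xs"
      by (rule rev_image_eqI[OF prod_carrier_fun_upd[OF p \<open>i < n\<close>]]) simp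
  qed
  assume "prod_carrier n Xs \<in> bornology (prod_carrier n Xs) (prod_ents n Xs Ents)"
  then have "Xs i \<in> bornology (Xs i) (Ents i)"
    using bounded_subset[OF prod_bounded_projection[OF _ \<open>i < n\<close>] Xs] by blast
  then show False
    using assms(3) unfolding unbounded_def by blast
qed

section \<open>Cofinal chains in preorders\<close>

definition cofinal_wrt :: "('b \<Rightarrow> 'b \<Rightarrow> bool) \<Rightarrow> 'b set \<Rightarrow> 'b set \<Rightarrow> bool" where
  "cofinal_wrt le T C \<longleftrightarrow> C \<subseteq> T \<and> (\<forall>x\<in>T. \<exists>c\<in>C. le x c)"

lemma cofinal_wrt_infinite:
  assumes trans: "\<And>x y z. le x y \<Longrightarrow> le y z \<Longrightarrow> le x z"
    and directed: "\<And>x y. x \<in> T \<Longrightarrow> y \<in> T \<Longrightarrow> \<exists>u\<in>T. le x u \<and> le y u"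
    and no_max: "\<And>x. x \<in> T \<Longrightarrow> \<exists>y\<in>T. \<not> le y x"
    and "T \<noteq> {}" and C: "cofinal_wrt le T C"
  shows "infinite C"
proof
  have bounded: "\<exists>u\<in>T. \<forall>c\<in>F. le c u" if "finite F" "F \<subseteq> T" for F
    using that
  proof (induction F rule: finite_induct)
    case empty
    then show ?case
      using \<open>T \<noteq> {}\<close> by blast
  next
    case (insert x F)
    then obtain u where u: "u \<in> T" "\<forall>c\<in>F. le c u"
      by blast
    obtain w where w: "w \<in> T" "le x w" "le u w"
      using directed[of x u] insert.prems u(1) by blast
    have "\<forall>c\<in>F. le c w"
      using u(2) w(3) trans by blast
    then show ?case
      using w(1,2) by blast
  qed
  assume "finite C"
  moreover have "C \<subseteq> T"
    using C unfolding cofinal_wrt_def by blast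
  ultimately obtain u where u: "u \<in> T" "\<forall>c\<in>C. le c u"
    using bounded by blast
  obtain y where y: "y \<in> T" "\<not> le y u"
    using no_max u(1) by blast
  then obtain c where "c \<in> C" "le y c"
    using C unfolding cofinal_wrt_def by blast
  then show False
    using y(2) u(2) trans by blast
qed

lemma chain_not_lepoll_bounded:
  assumes "Complete_Partial_Order.chain le T"
    and least: "\<And>C. cofinal_wrt le T C \<Longrightarrow> M \<lesssim> C"
    and "S \<subseteq> T" "\<not> M \<lesssim> S"
  shows "\<exists>u\<in>T. \<forall>s\<in>S. le s u"
proof (rule ccontr)
  assume "\<not> (\<exists>u\<in>T. \<forall>s\<in>S. le s u)"
  then have "cofinal_wrt le T S"
    using assms(1,3) unfolding cofinal_wrt_def Complete_Partial_Order.chain_def by blast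
  then show False
    using least \<open>\<not> M \<lesssim> S\<close> by blast
qed

text \<open>A cofinal chain is built by transfinite recursion along the cardinal well-order of \<open>M\<close>:
  the \<open>a\<close>-th element bounds \<open>a\<close> and all earlier elements, which form a set smaller than \<open>M\<close>.\<close>
lemma ex_cofinal_chain:
  assumes refl: "\<And>x. x \<in> T \<Longrightarrow> le x x"
    and trans: "\<And>x y z. le x y \<Longrightarrow> le y z \<Longrightarrow> le x z"
    and M: "cofinal_wrt le T M" "infinite M"
    and small: "\<And>S. S \<subseteq> T \<Longrightarrow> \<not> M \<lesssim> S \<Longrightarrow> \<exists>u\<in>T. \<forall>s\<in>S. le s u"
  shows "\<exists>C. cofinal_wrt le T C \<and> Complete_Partial_Order.chain le C"
proof -
  define R where "R = card_of M - Id"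
  have "wf R"
    using card_of_Well_order[of M] unfolding R_def well_order_on_def by blast
  have R_iff: "(b, a) \<in> R \<longleftrightarrow> b \<in> underS (card_of M) a" for a b
    unfolding R_def underS_def by auto
  define H where "H \<phi> a = (SOME u. u \<in> T \<and> le a u \<and> (\<forall>b. (b, a) \<in> R \<longrightarrow> le (\<phi> b) u))"
    for \<phi> a
  define c where "c = wfrec R H"
  have c: "c a \<in> T \<and> le a (c a) \<and> (\<forall>b. (b, a) \<in> R \<longrightarrow> le (c b) (c a))" if "a \<in> M" for a
    using that
  proof (induction a rule: wf_induct_rule[OF \<open>wf R\<close>])
    case (1 a)
    let ?S = "insert a (c ` underS (card_of M) a)"
    have "c b \<in> T" if "b \<in> underS (card_of M) a" for b
      using 1(1)[of b] R_iff[of b a] that underS_card_of_subset[of M a] by blast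
    moreover have "a \<in> T"
      using M(1) \<open>a \<in> M\<close> unfolding cofinal_wrt_def by blast
    ultimately have "?S \<subseteq> T"
      by blast
    then obtain u where u: "u \<in> T" "\<forall>s\<in>?S. le s u"
      using small[OF _ not_lepoll_insert_image_underS[OF M(2) \<open>a \<in> M\<close>]] by blast
    have "\<exists>u. u \<in> T \<and> le a u \<and> (\<forall>b. (b, a) \<in> R \<longrightarrow> le (cut c R a b) u)"
    proof (intro exI conjI allI impI)
      fix b assume "(b, a) \<in> R"
      then show "le (cut c R a b) u"
        using u(2) R_iff by (simp add: cut_apply)
    qed (use u in simp_all)
    then have "H (cut c R a) a \<in> T \<and> le a (H (cut c R a) a) \<and>
        (\<forall>b. (b, a) \<in> R \<longrightarrow> le (cut c R a b) (H (cut c R a) a))"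
      unfolding H_def by (rule someI_ex)
    moreover have "c a = H (cut c R a) a"
      unfolding c_def by (rule wfrec[OF \<open>wf R\<close>])
    ultimately show ?case
      by (simp add: cut_apply)
  qed
  have "cofinal_wrt le T (c ` M)"
    unfolding cofinal_wrt_def
  proof (intro conjI ballI)
    fix x assume "x \<in> T"
    then obtain a where "a \<in> M" "le x a"
      using M(1) unfolding cofinal_wrt_def by blast
    then show "\<exists>y\<in>c ` M. le x y"
      using c[OF \<open>a \<in> M\<close>] trans by blast
  qed (use c in blast)
  moreover have "Complete_Partial_Order.chain le (c ` M)"
    unfolding Complete_Partial_Order.chain_def
  proof (intro ballI)
    fix x y assume "x \<in> c ` M" "y \<in> c ` M"
    then obtain a b where ab: "a \<in> M" "b \<in> M" "x = c a" "y = c b"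
      by blast
    then consider "a = b" | "(a, b) \<in> R" | "(b, a) \<in> R"
      using card_of_underS_total[OF ab(1,2)] R_iff by blast
    then show "le x y \<or> le y x"
    proof cases
      case 1
      then show ?thesis
        using ab refl c[OF ab(1)] by simp
    next
      case 2
      then show ?thesis
        using ab c[OF ab(2)] by simp
    next
      case 3
      then show ?thesis
        using ab c[OF ab(1)] by simp
    qed
  qed
  ultimately show ?thesis
    by blast
qed

locale dichotomous_preorders =
  fixes T :: "'b set" and le0 leY :: "'b \<Rightarrow> 'b \<Rightarrow> bool" and f g :: "'b \<Rightarrow> 'b"
  assumes refl0: "\<And>x. x \<in> T \<Longrightarrow> le0 x x" and reflY: "\<And>x. x \<in> T \<Longrightarrow> leY x x"
    and trans0: "\<And>x y z. le0 x y \<Longrightarrow> le0 y z \<Longrightarrow> le0 x z"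
    and transY: "\<And>x y z. leY x y \<Longrightarrow> leY y z \<Longrightarrow> leY x z"
    and directed: "\<And>x y. x \<in> T \<Longrightarrow> y \<in> T \<Longrightarrow> \<exists>u\<in>T. le0 x u \<and> leY x u \<and> le0 y u \<and> leY y u"
    and no_max0: "\<And>x. x \<in> T \<Longrightarrow> \<exists>y\<in>T. \<not> le0 y x"
    and no_maxY: "\<And>x. x \<in> T \<Longrightarrow> \<exists>y\<in>T. \<not> leY y x"
    and f_in: "\<And>x. x \<in> T \<Longrightarrow> f x \<in> T" and g_in: "\<And>x. x \<in> T \<Longrightarrow> g x \<in> T"
    and dichotomy: "\<And>x y. x \<in> T \<Longrightarrow> y \<in> T \<Longrightarrow> le0 y (f x) \<or> leY x (g y)"
    and nonempty: "T \<noteq> {}"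
begin

definition le :: "'b \<Rightarrow> 'b \<Rightarrow> bool" where
  "le x y \<longleftrightarrow> le0 x y \<and> leY x y"

lemma cofinal0_infinite:
  assumes "cofinal_wrt le0 T C"
  shows "infinite C"
proof (rule cofinal_wrt_infinite[OF trans0 _ no_max0 nonempty assms])
  fix x y assume "x \<in> T" "y \<in> T"
  then show "\<exists>u\<in>T. le0 x u \<and> le0 y u"
    using directed by blast
qed

lemma cofinal0_image_g:
  assumes C: "cofinal_wrt le0 T C"
  shows "cofinal_wrt leY T (g ` C)"
proof -
  have CT: "C \<subseteq> T"
    using C unfolding cofinal_wrt_def by blast
  have "\<exists>c\<in>C. leY x (g c)" if x: "x \<in> T" for x
  proof (rule ccontr)
    assume "\<not> (\<exists>c\<in>C. leY x (g c))"
    then have below: "\<forall>c\<in>C. le0 c (f x)"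
      using dichotomy[OF x] CT by blast
    obtain y where y: "y \<in> T" "\<not> le0 y (f x)"
      using no_max0[OF f_in[OF x]] by blast
    then obtain c where "c \<in> C" "le0 y c"
      using C unfolding cofinal_wrt_def by blast
    then show False
      using below y(2) trans0 by blast
  qed
  then show ?thesis
    using CT g_in unfolding cofinal_wrt_def by blast
qed

lemma cofinalY_image_f:
  assumes C: "cofinal_wrt leY T C"
  shows "cofinal_wrt le0 T (f ` C)"
proof -
  have CT: "C \<subseteq> T"
    using C unfolding cofinal_wrt_def by blast
  have "\<exists>c\<in>C. le0 x (f c)" if x: "x \<in> T" for x
  proof (rule ccontr)
    assume "\<not> (\<exists>c\<in>C. le0 x (f c))"
    then have below: "\<forall>c\<in>C. leY c (g x)"
      using dichotomy[OF _ x] CT by blast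
    obtain y where y: "y \<in> T" "\<not> leY y (g x)"
      using no_maxY[OF g_in[OF x]] by blast
    then obtain c where "c \<in> C" "leY y c"
      using C unfolding cofinal_wrt_def by blast
    then show False
      using below y(2) transY by blast
  qed
  then show ?thesis
    using CT f_in unfolding cofinal_wrt_def by blast
qed

lemma cofinal0_lepoll:
  assumes C: "cofinal_wrt le0 T C"
  shows "\<exists>W. cofinal_wrt le T W \<and> W \<lesssim> C"
proof -
  let ?D = "g ` C"
  have D: "cofinal_wrt leY T ?D"
    using cofinal0_image_g[OF C] .
  have "\<exists>u\<in>T. le0 (fst z) u \<and> leY (snd z) u" if "z \<in> C \<times> ?D" for z
  proof -
    have "fst z \<in> T" "snd z \<in> T"
      using that C D unfolding cofinal_wrt_def by auto
    then show ?thesis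
      using directed by blast
  qed
  then obtain ub where ub: "\<forall>z\<in>C \<times> ?D. ub z \<in> T \<and> le0 (fst z) (ub z) \<and> leY (snd z) (ub z)"
    by metis
  have "cofinal_wrt le T (ub ` (C \<times> ?D))"
    unfolding cofinal_wrt_def le_def
  proof (intro conjI ballI)
    fix x assume "x \<in> T"
    then obtain a b where "a \<in> C" "le0 x a" "b \<in> ?D" "leY x b"
      using C D unfolding cofinal_wrt_def by meson
    then have "(a, b) \<in> C \<times> ?D" "le0 x (ub (a, b))" "leY x (ub (a, b))"
      using ub trans0 transY by auto
    then show "\<exists>w\<in>ub ` (C \<times> ?D). le0 x w \<and> leY x w"
      by blast
  qed (use ub in blast)
  moreover have "ub ` (C \<times> ?D) \<lesssim> C"
  proof -
    have "ub ` (C \<times> ?D) \<lesssim> C \<times> ?D"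
      by (rule image_lepoll)
    also have "\<dots> \<lesssim> C \<times> C"
      by (rule times_lepoll_mono[OF lepoll_refl image_lepoll])
    also have "\<dots> \<lesssim> C"
      by (rule infinite_Times_lepoll[OF cofinal0_infinite[OF C]])
    finally show ?thesis .
  qed
  ultimately show ?thesis
    by blast
qed

lemma cofinalY_lepoll:
  assumes "cofinal_wrt leY T C"
  shows "\<exists>W. cofinal_wrt le T W \<and> W \<lesssim> C"
proof -
  obtain W where "cofinal_wrt le T W" "W \<lesssim> f ` C"
    using cofinal0_lepoll[OF cofinalY_image_f[OF assms]] by blast
  then show ?thesis
    using lepoll_trans[OF _ image_lepoll] by blast
qed

text \<open>A set \<open>S\<close> smaller than every \<open>le\<close>-cofinal set has neither \<open>f ` S\<close> nor \<open>g ` S\<close> cofinal;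
  the dichotomy then bounds \<open>S\<close> in each preorder separately.\<close>
lemma small_bounded:
  assumes least: "\<And>C. cofinal_wrt le T C \<Longrightarrow> M \<lesssim> C"
    and S: "S \<subseteq> T" "\<not> M \<lesssim> S"
  shows "\<exists>u\<in>T. \<forall>s\<in>S. le s u"
proof -
  have small: "\<not> M \<lesssim> h ` S" for h
    using S(2) lepoll_trans[OF _ image_lepoll] by blast
  have "\<not> cofinal_wrt leY T (g ` S)"
  proof
    assume "cofinal_wrt leY T (g ` S)"
    then obtain W where "cofinal_wrt le T W" "W \<lesssim> g ` S"
      using cofinalY_lepoll by blast
    then show False
      using small least lepoll_trans by blast
  qed
  then obtain q where q: "q \<in> T" "\<forall>s\<in>S. \<not> leY q (g s)"
    using S(1) g_in unfolding cofinal_wrt_def by blast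
  then have q_bound: "\<forall>s\<in>S. le0 s (f q)"
    using dichotomy[OF q(1)] S(1) by blast
  have "\<not> cofinal_wrt le0 T (f ` S)"
  proof
    assume "cofinal_wrt le0 T (f ` S)"
    then obtain W where "cofinal_wrt le T W" "W \<lesssim> f ` S"
      using cofinal0_lepoll by blast
    then show False
      using small least lepoll_trans by blast
  qed
  then obtain p where p: "p \<in> T" "\<forall>s\<in>S. \<not> le0 p (f s)"
    using S(1) f_in unfolding cofinal_wrt_def by blast
  then have p_bound: "\<forall>s\<in>S. leY s (g p)"
    using dichotomy[OF _ p(1)] S(1) by blast
  obtain u where "u \<in> T" "le0 (f q) u" "leY (g p) u"
    using directed[OF f_in[OF q(1)] g_in[OF p(1)]] by blast
  then show ?thesis
    using p_bound q_bound trans0 transY unfolding le_def by blast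
qed

lemma ex_cofinal_chain_le: "\<exists>C. cofinal_wrt le T C \<and> Complete_Partial_Order.chain le C"
proof -
  have "cofinal_wrt le T T"
    using refl0 reflY unfolding cofinal_wrt_def le_def by blast
  then obtain M where M: "cofinal_wrt le T M" "\<And>C. cofinal_wrt le T C \<Longrightarrow> M \<lesssim> C"
    using ex_lepoll_least[of "cofinal_wrt le T"] by blast
  have "cofinal_wrt le0 T M"
    using M(1) unfolding cofinal_wrt_def le_def by blast
  then have "infinite M"
    by (rule cofinal0_infinite)
  show ?thesis
  proof (rule ex_cofinal_chain[OF _ _ M(1) \<open>infinite M\<close> small_bounded[OF M(2)]])
    show "le x x" if "x \<in> T" for x
      using that refl0 reflY unfolding le_def by blast
    show "le x z" if "le x y" "le y z" for x y z
      using that trans0 transY unfolding le_def by blast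
  qed
qed

end

section \<open>Normal products have a linearly ordered base\<close>

lemma prod_ball_mono:
  "(\<And>i. i < n \<Longrightarrow> Es i `` {p i} \<subseteq> Fs i `` {p i}) \<Longrightarrow>
    prod_ent n Xs Es `` {p} \<subseteq> prod_ent n Xs Fs `` {p}"
  by (auto simp: mem_prod_ent_iff subset_eq)

lemma bounded_subset_prod_ball:
  assumes "\<forall>i<n. ballean (Xs i) (Ents i)" "p \<in> prod_carrier n Xs"
    and "B \<in> bornology (prod_carrier n Xs) (prod_ents n Xs Ents)"
  shows "\<exists>Ks. (\<forall>i<n. Ks i \<in> Ents i) \<and> B \<subseteq> prod_ent n Xs Ks `` {p}"
proof -
  obtain E where "E \<in> prod_ents n Xs Ents" "B \<subseteq> E `` {p}"
    using bounded_subset_ball[OF ballean_prod[OF assms(1)] assms(3,2)] by blast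
  then show ?thesis
    unfolding mem_prod_ents_iff by blast
qed

lemma asymp_disjoint_prod_axes:
  assumes b: "\<forall>i<n. ballean (Xs i) (Ents i)" and p: "p \<in> prod_carrier n Xs"
  shows "asymp_disjoint (prod_carrier n Xs) (prod_ents n Xs Ents)
    {x \<in> prod_carrier n Xs. \<forall>i. 0 < i \<and> i < n \<longrightarrow> x i = p i} {x \<in> prod_carrier n Xs. x 0 = p 0}"
  unfolding asymp_disjoint_def
proof
  fix E assume "E \<in> prod_ents n Xs Ents"
  then obtain Es where Es: "\<forall>i<n. Es i \<in> Ents i" "E = prod_ent n Xs Es"
    unfolding mem_prod_ents_iff by blast
  have "y \<in> E `` {p}"
    if yA: "y \<in> E `` {x \<in> prod_carrier n Xs. \<forall>i. 0 < i \<and> i < n \<longrightarrow> x i = p i}"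
      and yC: "y \<in> E `` {x \<in> prod_carrier n Xs. x 0 = p 0}" for y
  proof -
    obtain x x' where x: "\<forall>i. 0 < i \<and> i < n \<longrightarrow> x i = p i" "(x, y) \<in> E"
      and x': "x' 0 = p 0" "(x', y) \<in> E"
      using yA yC by blast
    have "y \<in> prod_carrier n Xs"
      using x(2) unfolding Es(2) mem_prod_ent_iff by blast
    moreover have "(p i, y i) \<in> Es i" if "i < n" for i
      using x x' that unfolding Es(2) mem_prod_ent_iff by (cases "i = 0") auto
    ultimately have "(p, y) \<in> E"
      using p unfolding Es(2) mem_prod_ent_iff by blast
    then show ?thesis
      by blast
  qed
  then show "E `` {x \<in> prod_carrier n Xs. \<forall>i. 0 < i \<and> i < n \<longrightarrow> x i = p i} \<inter>
      E `` {x \<in> prod_carrier n Xs. x 0 = p 0} \<in> bornology (prod_carrier n Xs) (prod_ents n Xs Ents)"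
    using bounded_subset[OF ball_bounded[OF ballean_prod[OF b] \<open>E \<in> prod_ents n Xs Ents\<close> p]] by blast
qed

text \<open>The point \<open>p(0 := y\<^sub>0, j := y\<^sub>j)\<close> lies in \<open>E[A] \<inter> F[C]\<close> but, if the claim failed, in
  neither ball, hence in \<open>U \<inter> V\<close>.\<close>
lemma prod_axes_dichotomy:
  assumes b: "\<forall>i<n. ballean (Xs i) (Ents i)" and p: "p \<in> prod_carrier n Xs"
    and j: "0 < j" "j < n"
    and E: "\<forall>i<n. E i \<in> Ents i" and F: "\<forall>i<n. F i \<in> Ents i"
    and "U \<inter> V = {}"
    and EU: "prod_ent n Xs E `` {x \<in> prod_carrier n Xs. \<forall>i. 0 < i \<and> i < n \<longrightarrow> x i = p i} - U
      \<subseteq> prod_ent n Xs K `` {p}"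
    and FV: "prod_ent n Xs F `` {x \<in> prod_carrier n Xs. x 0 = p 0} - V \<subseteq> prod_ent n Xs K' `` {p}"
  shows "F 0 `` {p 0} \<subseteq> K 0 `` {p 0} \<or> E j `` {p j} \<subseteq> K' j `` {p j}"
proof (rule ccontr)
  assume "\<not> ?thesis"
  then obtain y0 yj where y0: "(p 0, y0) \<in> F 0" "(p 0, y0) \<notin> K 0"
    and yj: "(p j, yj) \<in> E j" "(p j, yj) \<notin> K' j"
    by blast
  have "0 < n" "j \<noteq> 0"
    using j by simp_all
  have "y0 \<in> Xs 0" "yj \<in> Xs j"
    using y0(1) yj(1) ballean_subset b E F j \<open>0 < n\<close> by blast+
  define y where "y = p(0 := y0, j := yj)"
  have yX: "y \<in> prod_carrier n Xs"
    unfolding y_def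
    using prod_carrier_fun_upd[OF prod_carrier_fun_upd[OF p \<open>0 < n\<close>] \<open>j < n\<close>] \<open>y0 \<in> Xs 0\<close> \<open>yj \<in> Xs j\<close>
    by blast
  have y_0: "y 0 = y0" and y_j: "y j = yj"
    using \<open>j \<noteq> 0\<close> by (simp_all add: y_def)
  have "p(0 := y0) \<in> prod_carrier n Xs"
    using prod_carrier_fun_upd[OF p \<open>0 < n\<close> \<open>y0 \<in> Xs 0\<close>] .
  moreover have "(p(0 := y0), y) \<in> prod_ent n Xs E"
    by (rule prod_ent_memI[OF b E \<open>p(0 := y0) \<in> prod_carrier n Xs\<close> yX])
      (use yj(1) \<open>j \<noteq> 0\<close> in \<open>auto simp: y_def\<close>)
  moreover have "y \<notin> prod_ent n Xs K `` {p}"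
    using y0(2) y_0 \<open>0 < n\<close> unfolding Image_singleton_iff mem_prod_ent_iff by metis
  ultimately have "y \<in> U"
    using EU \<open>j \<noteq> 0\<close> by fastforce
  have "p(j := yj) \<in> prod_carrier n Xs"
    using prod_carrier_fun_upd[OF p \<open>j < n\<close> \<open>yj \<in> Xs j\<close>] .
  moreover have "(p(j := yj), y) \<in> prod_ent n Xs F"
    by (rule prod_ent_memI[OF b F \<open>p(j := yj) \<in> prod_carrier n Xs\<close> yX])
      (use y0(1) \<open>j \<noteq> 0\<close> in \<open>auto simp: y_def\<close>)
  moreover have "y \<notin> prod_ent n Xs K' `` {p}"
    using yj(2) y_j \<open>j < n\<close> unfolding Image_singleton_iff mem_prod_ent_iff by metis
  ultimately have "y \<in> V"
    using FV \<open>j \<noteq> 0\<close> by fastforce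
  then show False
    using \<open>y \<in> U\<close> \<open>U \<inter> V = {}\<close> by blast
qed

lemma dichotomous_preorders_prod_balls:
  assumes "2 \<le> n" and b: "\<forall>i<n. ballean (Xs i) (Ents i)" and ub: "\<forall>i<n. unbounded (Xs i) (Ents i)"
    and p: "p \<in> prod_carrier n Xs" and "U \<inter> V = {}"
    and f: "\<And>E. \<forall>i<n. E i \<in> Ents i \<Longrightarrow> (\<forall>i<n. f E i \<in> Ents i) \<and>
      prod_ent n Xs E `` {x \<in> prod_carrier n Xs. \<forall>i. 0 < i \<and> i < n \<longrightarrow> x i = p i} - U
        \<subseteq> prod_ent n Xs (f E) `` {p}"
    and g: "\<And>F. \<forall>i<n. F i \<in> Ents i \<Longrightarrow> (\<forall>i<n. g F i \<in> Ents i) \<and>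
      prod_ent n Xs F `` {x \<in> prod_carrier n Xs. x 0 = p 0} - V \<subseteq> prod_ent n Xs (g F) `` {p}"
  shows "dichotomous_preorders {Es. \<forall>i<n. Es i \<in> Ents i}
    (\<lambda>s t. s 0 `` {p 0} \<subseteq> t 0 `` {p 0}) (\<lambda>s t. \<forall>i. 0 < i \<and> i < n \<longrightarrow> s i `` {p i} \<subseteq> t i `` {p i})
    f g"
proof
  have "0 < n" "1 < n"
    using \<open>2 \<le> n\<close> by simp_all
  have larger: "\<exists>y\<in>{Es. \<forall>i<n. Es i \<in> Ents i}. \<not> y i `` {p i} \<subseteq> x i `` {p i}"
    if x: "x \<in> {Es. \<forall>i<n. Es i \<in> Ents i}" and "i < n" for x i
  proof -
    obtain F where "F \<in> Ents i" "\<not> F `` {p i} \<subseteq> x i `` {p i}"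
      using unbounded_ex_ball_not_subset[of "Xs i" "Ents i" "x i" "p i"] b ub x \<open>i < n\<close>
        prod_carrier_nth[OF p \<open>i < n\<close>] by blast
    then show ?thesis
      using x by (intro bexI[of _ "x(i := F)"]) auto
  qed
  show "\<exists>y\<in>{Es. \<forall>i<n. Es i \<in> Ents i}. \<not> y 0 `` {p 0} \<subseteq> x 0 `` {p 0}"
    if "x \<in> {Es. \<forall>i<n. Es i \<in> Ents i}" for x
    using larger[OF that \<open>0 < n\<close>] .
  show "\<exists>y\<in>{Es. \<forall>i<n. Es i \<in> Ents i}.
      \<not> (\<forall>i. 0 < i \<and> i < n \<longrightarrow> y i `` {p i} \<subseteq> x i `` {p i})"
    if x: "x \<in> {Es. \<forall>i<n. Es i \<in> Ents i}" for x
  proof -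
    obtain y where "y \<in> {Es. \<forall>i<n. Es i \<in> Ents i}" "\<not> y 1 `` {p 1} \<subseteq> x 1 `` {p 1}"
      using larger[OF x \<open>1 < n\<close>] by blast
    then show ?thesis
      using \<open>1 < n\<close> zero_less_one by blast
  qed
  show "\<exists>u\<in>{Es. \<forall>i<n. Es i \<in> Ents i}.
      x 0 `` {p 0} \<subseteq> u 0 `` {p 0} \<and> (\<forall>i. 0 < i \<and> i < n \<longrightarrow> x i `` {p i} \<subseteq> u i `` {p i}) \<and>
      y 0 `` {p 0} \<subseteq> u 0 `` {p 0} \<and> (\<forall>i. 0 < i \<and> i < n \<longrightarrow> y i `` {p i} \<subseteq> u i `` {p i})"
    if "x \<in> {Es. \<forall>i<n. Es i \<in> Ents i}" "y \<in> {Es. \<forall>i<n. Es i \<in> Ents i}" for x y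
  proof -
    have "\<exists>D\<in>Ents i. x i \<union> y i \<subseteq> D" if "i < n" for i
      using ballean_Un[of "Xs i" "Ents i" "x i" "y i"] b \<open>i < n\<close>
        \<open>x \<in> {Es. \<forall>i<n. Es i \<in> Ents i}\<close> \<open>y \<in> {Es. \<forall>i<n. Es i \<in> Ents i}\<close> by blast
    then obtain u where "\<forall>i<n. u i \<in> Ents i \<and> x i \<union> y i \<subseteq> u i"
      by metis
    then show ?thesis
      using \<open>0 < n\<close> by (intro bexI[of _ u]) blast+
  qed
  show "y 0 `` {p 0} \<subseteq> f x 0 `` {p 0} \<or>
      (\<forall>i. 0 < i \<and> i < n \<longrightarrow> x i `` {p i} \<subseteq> g y i `` {p i})"
    if x: "x \<in> {Es. \<forall>i<n. Es i \<in> Ents i}" and y: "y \<in> {Es. \<forall>i<n. Es i \<in> Ents i}" for x y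
    using prod_axes_dichotomy[OF b p _ _ _ _ \<open>U \<inter> V = {}\<close> conjunct2[OF f] conjunct2[OF g]] x y
    by blast
  show "f x \<in> {Es. \<forall>i<n. Es i \<in> Ents i}" if "x \<in> {Es. \<forall>i<n. Es i \<in> Ents i}" for x
    using f that by blast
  show "g x \<in> {Es. \<forall>i<n. Es i \<in> Ents i}" if "x \<in> {Es. \<forall>i<n. Es i \<in> Ents i}" for x
    using g that by blast
  show "{Es. \<forall>i<n. Es i \<in> Ents i} \<noteq> {}"
    using ex_entourage_tuple[OF b p] by blast
qed auto

lemma has_linear_base_if_normal_prod:
  assumes "2 \<le> n" and b: "\<forall>i<n. ballean (Xs i) (Ents i)" and ub: "\<forall>i<n. unbounded (Xs i) (Ents i)"
    and "prod_carrier n Xs \<noteq> {}"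
    and normal: "normal_ballean (prod_carrier n Xs) (prod_ents n Xs Ents)"
  shows "has_linear_base (bornology (prod_carrier n Xs) (prod_ents n Xs Ents))"
proof -
  let ?X = "prod_carrier n Xs" and ?Ent = "prod_ents n Xs Ents" and ?T = "{Es. \<forall>i<n. Es i \<in> Ents i}"
  obtain p where p: "p \<in> ?X"
    using assms(4) by blast
  define A where "A = {x \<in> ?X. \<forall>i. 0 < i \<and> i < n \<longrightarrow> x i = p i}"
  define C where "C = {x \<in> ?X. x 0 = p 0}"
  obtain U V where UV: "asymp_nbhd ?X ?Ent U A" "asymp_nbhd ?X ?Ent V C" "U \<inter> V = {}"
    using normal[unfolded normal_ballean_def, rule_format, of A C] asymp_disjoint_prod_axes[OF b p]
    unfolding A_def C_def by blast
  have "\<exists>K. (\<forall>i<n. K i \<in> Ents i) \<and> prod_ent n Xs E `` Z - W \<subseteq> prod_ent n Xs K `` {p}"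
    if "asymp_nbhd ?X ?Ent W Z" "\<forall>i<n. E i \<in> Ents i" for E W Z
  proof (rule bounded_subset_prod_ball[OF b p])
    have "prod_ent n Xs E \<in> ?Ent"
      using that(2) unfolding mem_prod_ents_iff by blast
    then show "prod_ent n Xs E `` Z - W \<in> bornology ?X ?Ent"
      using that(1) unfolding asymp_nbhd_def by blast
  qed
  then obtain f g where
    "\<And>E. \<forall>i<n. E i \<in> Ents i \<Longrightarrow> (\<forall>i<n. f E i \<in> Ents i) \<and> prod_ent n Xs E `` A - U \<subseteq> prod_ent n Xs (f E) `` {p}"
    "\<And>E. \<forall>i<n. E i \<in> Ents i \<Longrightarrow> (\<forall>i<n. g E i \<in> Ents i) \<and> prod_ent n Xs E `` C - V \<subseteq> prod_ent n Xs (g E) `` {p}"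
    using UV(1,2) by metis
  then interpret D: dichotomous_preorders ?T "\<lambda>s t. s 0 `` {p 0} \<subseteq> t 0 `` {p 0}"
    "\<lambda>s t. \<forall>i. 0 < i \<and> i < n \<longrightarrow> s i `` {p i} \<subseteq> t i `` {p i}" f g
    using dichotomous_preorders_prod_balls[OF assms(1) b ub p UV(3)] unfolding A_def C_def by blast
  obtain Ch where Ch: "cofinal_wrt D.le ?T Ch" "Complete_Partial_Order.chain D.le Ch"
    using D.ex_cofinal_chain_le by blast
  have mono: "prod_ent n Xs s `` {p} \<subseteq> prod_ent n Xs t `` {p}" if "D.le s t" for s t
    using that unfolding D.le_def by (intro prod_ball_mono) (metis gr0I)
  show ?thesis
    unfolding has_linear_base_def
  proof (intro exI conjI ballI)
    show "(\<lambda>t. prod_ent n Xs t `` {p}) ` Ch \<subseteq> bornology ?X ?Ent"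
      using Ch(1) ball_bounded[OF ballean_prod[OF b] _ p] unfolding cofinal_wrt_def mem_prod_ents_iff
      by blast
  next
    fix a b assume "a \<in> (\<lambda>t. prod_ent n Xs t `` {p}) ` Ch" "b \<in> (\<lambda>t. prod_ent n Xs t `` {p}) ` Ch"
    then show "a \<subseteq> b \<or> b \<subseteq> a"
      using Ch(2) mono unfolding Complete_Partial_Order.chain_def by blast
  next
    fix B assume "B \<in> bornology ?X ?Ent"
    then obtain K where "K \<in> ?T" "B \<subseteq> prod_ent n Xs K `` {p}"
      using bounded_subset_prod_ball[OF b p] by blast
    moreover from this(1) obtain c where "c \<in> Ch" "D.le K c"
      using Ch(1) unfolding cofinal_wrt_def by blast
    ultimately show "\<exists>l\<in>(\<lambda>t. prod_ent n Xs t `` {p}) ` Ch. B \<subseteq> l"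
      using mono by blast
  qed
qed

section \<open>Normality from a linearly ordered base\<close>

lemma asymp_nbhd_UN_Image_Diff:
  assumes b: "ballean X Ent" and e: "e ` M \<subseteq> Ent" and cof: "\<forall>E\<in>Ent. \<exists>m\<in>M. E \<subseteq> e m"
    and \<psi>: "\<forall>m\<in>M. \<psi> m \<in> bornology X Ent"
  shows "asymp_nbhd X Ent (\<Union>m\<in>M. e m `` (Z - \<psi> m)) Z"
  unfolding asymp_nbhd_def
proof
  fix E assume "E \<in> Ent"
  then obtain m where m: "m \<in> M" "E \<subseteq> e m"
    using cof by blast
  have "E `` Z - (\<Union>m\<in>M. e m `` (Z - \<psi> m)) \<subseteq> e m `` \<psi> m"
    using m by blast
  moreover have "e m `` \<psi> m \<in> bornology X Ent"
    using Image_bounded[OF b] \<psi> e m(1) by blast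
  ultimately show "E `` Z - (\<Union>m\<in>M. e m `` (Z - \<psi> m)) \<in> bornology X Ent"
    by (rule bounded_subset[rotated])
qed

lemma normal_ballean_if_small_Unions_bounded:
  assumes b: "ballean X Ent" and "infinite M"
    and e: "e ` M \<subseteq> Ent" and cof: "\<forall>E\<in>Ent. \<exists>m\<in>M. E \<subseteq> e m"
    and small: "\<And>S. S \<subseteq> bornology X Ent \<Longrightarrow> \<not> M \<lesssim> S \<Longrightarrow> \<Union>S \<in> bornology X Ent"
  shows "normal_ballean X Ent"
  unfolding normal_ballean_def
proof (intro allI impI)
  fix A C assume "A \<subseteq> X" "C \<subseteq> X" and AC: "asymp_disjoint X Ent A C"
  have "\<exists>D\<in>Ent. e \<alpha> O (e \<beta>)\<inverse> \<subseteq> D" if "\<alpha> \<in> M" "\<beta> \<in> M" for \<alpha> \<beta>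
    using ballean_relcomp_converse[OF b, of "e \<alpha>" "e \<beta>"] e that by (simp add: image_subset_iff)
  then obtain D where D: "\<And>\<alpha> \<beta>. \<alpha> \<in> M \<Longrightarrow> \<beta> \<in> M \<Longrightarrow> D \<alpha> \<beta> \<in> Ent \<and> e \<alpha> O (e \<beta>)\<inverse> \<subseteq> D \<alpha> \<beta>"
    by metis
  define I where "I \<beta> = insert \<beta> (underS (card_of M) \<beta>)" for \<beta>
  define \<psi> where "\<psi> \<beta> = (\<Union>\<alpha>\<in>I \<beta>. D \<alpha> \<beta> `` A \<inter> D \<alpha> \<beta> `` C)" for \<beta>
  have \<psi>: "\<forall>\<beta>\<in>M. \<psi> \<beta> \<in> bornology X Ent"
  proof
    fix \<beta> assume "\<beta> \<in> M"
    have "(\<lambda>\<alpha>. D \<alpha> \<beta> `` A \<inter> D \<alpha> \<beta> `` C) ` I \<beta> \<subseteq> bornology X Ent"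
    proof (rule image_subsetI)
      fix \<alpha> assume "\<alpha> \<in> I \<beta>"
      then have "\<alpha> \<in> M"
        using \<open>\<beta> \<in> M\<close> underS_card_of_subset[of M \<beta>] unfolding I_def by blast
      then have "D \<alpha> \<beta> \<in> Ent"
        using D[OF _ \<open>\<beta> \<in> M\<close>] by blast
      then show "D \<alpha> \<beta> `` A \<inter> D \<alpha> \<beta> `` C \<in> bornology X Ent"
        using AC unfolding asymp_disjoint_def by blast
    qed
    moreover have "\<not> M \<lesssim> (\<lambda>\<alpha>. D \<alpha> \<beta> `` A \<inter> D \<alpha> \<beta> `` C) ` I \<beta>"
      using not_lepoll_insert_image_underS[OF \<open>infinite M\<close> \<open>\<beta> \<in> M\<close>] unfolding I_def by simp
    ultimately show "\<psi> \<beta> \<in> bornology X Ent"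
      unfolding \<psi>_def by (rule small)
  qed
  have key: "v \<in> \<psi> \<delta>"
    if "\<gamma> \<in> M" "\<delta> \<in> M" "\<gamma> \<in> I \<delta>" "(u, y) \<in> e \<gamma>" "(v, y) \<in> e \<delta>" "v \<in> X"
      and "u \<in> A \<and> v \<in> C \<or> u \<in> C \<and> v \<in> A" for \<gamma> \<delta> u v y
  proof -
    have "(u, v) \<in> D \<gamma> \<delta>" "(v, v) \<in> D \<gamma> \<delta>"
      using D[OF that(1,2)] that(4,5) ballean_refl[OF b _ that(6)] by blast+
    then have "v \<in> D \<gamma> \<delta> `` A \<inter> D \<gamma> \<delta> `` C"
      using that(7) by blast
    then show ?thesis
      using that(3) unfolding \<psi>_def by blast
  qed
  have disjoint: "y \<notin> e \<beta> `` (C - \<psi> \<beta>)" if ab: "\<alpha> \<in> M" "\<beta> \<in> M" and y: "y \<in> e \<alpha> `` (A - \<psi> \<alpha>)" for \<alpha> \<beta> y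
  proof
    assume "y \<in> e \<beta> `` (C - \<psi> \<beta>)"
    then obtain c where c: "c \<in> C" "c \<notin> \<psi> \<beta>" "(c, y) \<in> e \<beta>"
      by blast
    obtain a where a: "a \<in> A" "a \<notin> \<psi> \<alpha>" "(a, y) \<in> e \<alpha>"
      using y by blast
    have "\<alpha> \<in> I \<beta> \<or> \<beta> \<in> I \<alpha>"
      using card_of_underS_total[OF ab] unfolding I_def by blast
    then show False
    proof
      assume "\<alpha> \<in> I \<beta>"
      then show False
        using key[OF ab(1,2) _ a(3) c(3)] a(1) c(1,2) \<open>C \<subseteq> X\<close> by blast
    next
      assume "\<beta> \<in> I \<alpha>"
      then show False
        using key[OF ab(2,1) _ c(3) a(3)] a(1,2) c(1) \<open>A \<subseteq> X\<close> by blast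
    qed
  qed
  define U where "U = (\<Union>\<alpha>\<in>M. e \<alpha> `` (A - \<psi> \<alpha>))"
  define V where "V = (\<Union>\<beta>\<in>M. e \<beta> `` (C - \<psi> \<beta>))"
  have "U \<inter> V = {}"
  proof (rule equals0I)
    fix y assume "y \<in> U \<inter> V"
    then obtain \<alpha> \<beta> where "\<alpha> \<in> M" "y \<in> e \<alpha> `` (A - \<psi> \<alpha>)" "\<beta> \<in> M" "y \<in> e \<beta> `` (C - \<psi> \<beta>)"
      unfolding U_def V_def by blast
    then show False
      using disjoint by blast
  qed
  moreover have "(\<Union>\<alpha>\<in>M. e \<alpha> `` (Z - \<psi> \<alpha>)) \<subseteq> X" for Z
  proof (rule UN_least)
    fix \<alpha> assume "\<alpha> \<in> M"
    then have "e \<alpha> \<subseteq> X \<times> X"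
      using ballean_subset[OF b] e by blast
    then show "e \<alpha> `` (Z - \<psi> \<alpha>) \<subseteq> X"
      by blast
  qed
  ultimately show "\<exists>U V. U \<subseteq> X \<and> V \<subseteq> X \<and> asymp_nbhd X Ent U A \<and> asymp_nbhd X Ent V C \<and> U \<inter> V = {}"
    unfolding U_def V_def using asymp_nbhd_UN_Image_Diff[OF b e cof \<psi>] by (intro exI conjI)
qed

lemma cof_regular_ex_cofinal_entourages:
  assumes "cof_regular X Ent" "cofinal Q (bornology X Ent)" "Q \<lesssim> M" "Ent \<noteq> {}"
  shows "\<exists>h. h ` M \<subseteq> Ent \<and> (\<forall>E\<in>Ent. \<exists>m\<in>M. E \<subseteq> h m)"
proof -
  obtain C D where C: "min_cofinal C Ent" and D: "min_cofinal D (bornology X Ent)" and "C \<approx> D"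
    using assms(1) unfolding cof_regular_def same_cof_def by blast
  have "D \<lesssim> Q"
    using D assms(2) unfolding min_cofinal_def by blast
  then have "C \<lesssim> M"
    by (rule lepoll_trans1[OF \<open>C \<approx> D\<close> lepoll_trans[OF _ assms(3)]])
  have C_cof: "C \<subseteq> Ent" "\<forall>E\<in>Ent. \<exists>c\<in>C. E \<subseteq> c"
    using C unfolding min_cofinal_def cofinal_def by blast+
  then have "C \<noteq> {}"
    using assms(4) by blast
  then obtain h where h: "h ` M = C"
    using lepoll_imp_surj_onto[OF _ \<open>C \<lesssim> M\<close>] by blast
  have "\<exists>m\<in>M. E \<subseteq> h m" if E: "E \<in> Ent" for E
  proof -
    obtain c where "c \<in> C" "E \<subseteq> c"
      using C_cof(2) E by blast
    then show ?thesis
      using h by (metis imageE)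
  qed
  then show ?thesis
    using C_cof(1) h by (intro exI[of _ h] conjI) simp_all
qed

lemma prod_ents_ex_cofinal_family:
  assumes "infinite M" and h: "\<forall>i<n. h i ` M \<subseteq> Ents i \<and> (\<forall>E\<in>Ents i. \<exists>m\<in>M. E \<subseteq> h i m)"
  shows "\<exists>e. e ` M \<subseteq> prod_ents n Xs Ents \<and> (\<forall>E\<in>prod_ents n Xs Ents. \<exists>m\<in>M. E \<subseteq> e m)"
proof -
  have "PiE {..<n} (\<lambda>_. M) \<noteq> {}"
    using \<open>infinite M\<close> by (auto simp: PiE_eq_empty_iff)
  then obtain s where s: "s ` M = PiE {..<n} (\<lambda>_. M)"
    using lepoll_imp_surj_onto[OF _ PiE_lessThan_lepoll[OF \<open>infinite M\<close>, of n]] by meson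
  define e where "e m = prod_ent n Xs (\<lambda>i. h i (s m i))" for m
  show ?thesis
  proof (intro exI[of _ e] conjI image_subsetI ballI)
    fix m assume "m \<in> M"
    then have "s m \<in> PiE {..<n} (\<lambda>_. M)"
      unfolding s[symmetric] by (rule imageI)
    then have "\<forall>i<n. h i (s m i) \<in> Ents i"
      using h by auto
    then show "e m \<in> prod_ents n Xs Ents"
      unfolding e_def mem_prod_ents_iff by (intro exI[of _ "\<lambda>i. h i (s m i)"]) simp
  next
    fix E assume "E \<in> prod_ents n Xs Ents"
    then obtain Es where Es: "\<forall>i<n. Es i \<in> Ents i" "E = prod_ent n Xs Es"
      unfolding mem_prod_ents_iff by blast
    have "\<exists>m\<in>M. Es i \<subseteq> h i m" if "i < n" for i
      using h Es(1) that by meson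
    then obtain k where k: "\<forall>i<n. k i \<in> M \<and> Es i \<subseteq> h i (k i)"
      by metis
    then have "restrict k {..<n} \<in> s ` M"
      unfolding s by auto
    then obtain m where "m \<in> M" "s m = restrict k {..<n}"
      by (metis imageE)
    moreover have "E \<subseteq> e m" if "s m = restrict k {..<n}" for m
      unfolding Es(2) e_def using k that by (intro prod_ent_mono) simp
    ultimately show "\<exists>m\<in>M. E \<subseteq> e m"
      by blast
  qed
qed

lemma cofinal_prod_bornology_projection:
  assumes b: "\<forall>i<n. ballean (Xs i) (Ents i)" and p: "p \<in> prod_carrier n Xs" and "i < n"
    and Q: "Q \<subseteq> bornology (prod_carrier n Xs) (prod_ents n Xs Ents)"
      "\<forall>B\<in>bornology (prod_carrier n Xs) (prod_ents n Xs Ents). \<exists>q\<in>Q. B \<subseteq> q"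
  shows "cofinal ((\<lambda>B. (\<lambda>x. x i) ` B) ` Q) (bornology (Xs i) (Ents i))"
  unfolding cofinal_def
proof (intro conjI ballI)
  show "(\<lambda>B. (\<lambda>x. x i) ` B) ` Q \<subseteq> bornology (Xs i) (Ents i)"
    using prod_bounded_projection[OF _ \<open>i < n\<close>] Q(1) by blast
next
  fix B assume "B \<in> bornology (Xs i) (Ents i)"
  then obtain q where "q \<in> Q" "(\<lambda>z. p(i := z)) ` B \<subseteq> q"
    using Q(2) prod_bounded_embedding[OF b p \<open>i < n\<close>] by blast
  from this(2) have "(\<lambda>x. x i) ` (\<lambda>z. p(i := z)) ` B \<subseteq> (\<lambda>x. x i) ` q"
    by (rule image_mono)
  then have "B \<subseteq> (\<lambda>x. x i) ` q"
    by (simp add: image_image)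
  then show "\<exists>c\<in>(\<lambda>B. (\<lambda>x. x i) ` B) ` Q. B \<subseteq> c"
    using \<open>q \<in> Q\<close> by blast
qed

lemma linear_base_cofinal_infinite:
  assumes b: "ballean X Ent" and "unbounded X Ent" "X \<noteq> {}"
    and L: "L \<subseteq> bornology X Ent" "Complete_Partial_Order.chain (\<subseteq>) L"
      "\<forall>B\<in>bornology X Ent. \<exists>l\<in>L. B \<subseteq> l"
    and M: "cofinal_wrt (\<subseteq>) L M"
  shows "infinite M"
proof (rule cofinal_wrt_infinite[OF _ _ _ _ M])
  show "x \<subseteq> z" if "x \<subseteq> y" "y \<subseteq> z" for x y z :: "'a set"
    using that by (rule order_trans)
  show "\<exists>u\<in>L. x \<subseteq> u \<and> y \<subseteq> u" if xy: "x \<in> L" "y \<in> L" for x y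
  proof -
    consider "x \<subseteq> y" | "y \<subseteq> x"
      using L(2) xy unfolding Complete_Partial_Order.chain_def by meson
    then show ?thesis
      using xy by cases auto
  qed
  show "\<exists>y\<in>L. \<not> y \<subseteq> l" if l: "l \<in> L" for l
  proof -
    have "l \<in> bornology X Ent"
      using L(1) l by blast
    then have "\<not> X \<subseteq> l"
      using \<open>unbounded X Ent\<close> bounded_subset[of l X Ent X] unfolding unbounded_def by blast
    then obtain x where "x \<in> X" "x \<notin> l"
      by blast
    moreover obtain y where "y \<in> L" "{x} \<subseteq> y"
      using L(3) singleton_bounded[OF b \<open>x \<in> X\<close>] by blast
    ultimately show ?thesis
      by blast
  qed
  obtain x where "x \<in> X"
    using \<open>X \<noteq> {}\<close> by blast
  then show "L \<noteq> {}"
    using L(3) singleton_bounded[OF b \<open>x \<in> X\<close>] by blast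
qed

lemma linear_base_small_Union_bounded:
  assumes L: "L \<subseteq> bornology X Ent" "Complete_Partial_Order.chain (\<subseteq>) L"
      "\<forall>B\<in>bornology X Ent. \<exists>l\<in>L. B \<subseteq> l"
    and least: "\<And>C. cofinal_wrt (\<subseteq>) L C \<Longrightarrow> M \<lesssim> C"
    and S: "S \<subseteq> bornology X Ent" "\<not> M \<lesssim> S"
  shows "\<Union>S \<in> bornology X Ent"
proof -
  have "\<exists>l\<in>L. s \<subseteq> l" if "s \<in> S" for s
    using L(3) S(1) that by blast
  then obtain \<phi> where \<phi>: "\<And>s. s \<in> S \<Longrightarrow> \<phi> s \<in> L \<and> s \<subseteq> \<phi> s"
    by metis
  have "\<phi> ` S \<subseteq> L"
    using \<phi> by blast
  moreover have "\<not> M \<lesssim> \<phi> ` S"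
    using S(2) lepoll_trans[OF _ image_lepoll] by blast
  ultimately obtain l where l: "l \<in> L" "\<forall>t\<in>\<phi> ` S. t \<subseteq> l"
    using chain_not_lepoll_bounded[OF L(2) least] by blast
  have "\<Union>S \<subseteq> l"
  proof (rule Union_least)
    fix s assume "s \<in> S"
    then show "s \<subseteq> l"
      using \<phi>[of s] l(2) by blast
  qed
  moreover have "l \<in> bornology X Ent"
    using L(1) l(1) by blast
  ultimately show ?thesis
    using bounded_subset by blast
qed

lemma normal_prod_if_has_linear_base:
  assumes "0 < n" and b: "\<forall>i<n. ballean (Xs i) (Ents i)" and ub: "\<forall>i<n. unbounded (Xs i) (Ents i)"
    and "prod_carrier n Xs \<noteq> {}" and creg: "\<forall>i<n. cof_regular (Xs i) (Ents i)"
    and "has_linear_base (bornology (prod_carrier n Xs) (prod_ents n Xs Ents))"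
  shows "normal_ballean (prod_carrier n Xs) (prod_ents n Xs Ents)"
proof -
  let ?X = "prod_carrier n Xs" and ?Ent = "prod_ents n Xs Ents"
  have bX: "ballean ?X ?Ent"
    using ballean_prod[OF b] .
  obtain L where L: "L \<subseteq> bornology ?X ?Ent" "\<forall>a\<in>L. \<forall>b\<in>L. a \<subseteq> b \<or> b \<subseteq> a"
    "\<forall>B\<in>bornology ?X ?Ent. \<exists>l\<in>L. B \<subseteq> l"
    using assms(6) unfolding has_linear_base_def by (elim exE conjE)
  have chain: "Complete_Partial_Order.chain (\<subseteq>) L"
    using L(2) unfolding Complete_Partial_Order.chain_def .
  have "cofinal_wrt (\<subseteq>) L L"
    unfolding cofinal_wrt_def by blast
  then obtain M where M: "cofinal_wrt (\<subseteq>) L M" "\<And>C. cofinal_wrt (\<subseteq>) L C \<Longrightarrow> M \<lesssim> C"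
    using ex_lepoll_least[of "cofinal_wrt (\<subseteq>) L"] by blast
  have "unbounded ?X ?Ent"
    using unbounded_prod[OF assms(4,1)] ub \<open>0 < n\<close> by blast
  then have "infinite M"
    using linear_base_cofinal_infinite[OF bX _ assms(4) L(1) chain L(3) M(1)] by blast
  have M_cof: "M \<subseteq> bornology ?X ?Ent" "\<forall>B\<in>bornology ?X ?Ent. \<exists>m\<in>M. B \<subseteq> m"
  proof -
    show "M \<subseteq> bornology ?X ?Ent"
      using L(1) M(1) unfolding cofinal_wrt_def by blast
    show "\<forall>B\<in>bornology ?X ?Ent. \<exists>m\<in>M. B \<subseteq> m"
    proof
      fix B assume "B \<in> bornology ?X ?Ent"
      then obtain l where "l \<in> L" "B \<subseteq> l"
        using L(3) by blast
      moreover from this(1) obtain m where "m \<in> M" "l \<subseteq> m"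
        using M(1) unfolding cofinal_wrt_def by blast
      ultimately show "\<exists>m\<in>M. B \<subseteq> m"
        by blast
    qed
  qed
  obtain p where p: "p \<in> ?X"
    using assms(4) by blast
  have "\<exists>h. h ` M \<subseteq> Ents i \<and> (\<forall>E\<in>Ents i. \<exists>m\<in>M. E \<subseteq> h m)" if i: "i < n" for i
  proof (rule cof_regular_ex_cofinal_entourages)
    show "cof_regular (Xs i) (Ents i)"
      using creg i by blast
    show "cofinal ((\<lambda>B. (\<lambda>x. x i) ` B) ` M) (bornology (Xs i) (Ents i))"
      by (rule cofinal_prod_bornology_projection[OF b p i M_cof])
    show "(\<lambda>B. (\<lambda>x. x i) ` B) ` M \<lesssim> M"
      by (rule image_lepoll)
    show "Ents i \<noteq> {}"
      using ballean_nonempty[of "Xs i" "Ents i"] b prod_carrier_nth[OF p i] i by blast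
  qed
  then obtain h where "\<forall>i<n. h i ` M \<subseteq> Ents i \<and> (\<forall>E\<in>Ents i. \<exists>m\<in>M. E \<subseteq> h i m)"
    by metis
  then have "\<exists>e. e ` M \<subseteq> ?Ent \<and> (\<forall>E\<in>?Ent. \<exists>m\<in>M. E \<subseteq> e m)"
    by (rule prod_ents_ex_cofinal_family[OF \<open>infinite M\<close>])
  then obtain e where e: "e ` M \<subseteq> ?Ent" "\<forall>E\<in>?Ent. \<exists>m\<in>M. E \<subseteq> e m"
    by (elim exE conjE)
  show ?thesis
    using normal_ballean_if_small_Unions_bounded[OF bX \<open>infinite M\<close> e
        linear_base_small_Union_bounded[OF L(1) chain L(3) M(2)]] .
qed

theorem theorem1p8:
  fixes n :: nat and Xs :: "nat \<Rightarrow> 'a set" and Ents :: "nat \<Rightarrow> ('a \<times> 'a) set set"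
  assumes "n \<ge> 2"
    and "\<forall>i<n. ballean (Xs i) (Ents i) \<and> unbounded (Xs i) (Ents i)"
  shows "(normal_ballean (prod_carrier n Xs) (prod_ents n Xs Ents) \<longrightarrow>
            has_linear_base (bornology (prod_carrier n Xs) (prod_ents n Xs Ents)))
       \<and> ((\<forall>i<n. cof_regular (Xs i) (Ents i)) \<and>
            has_linear_base (bornology (prod_carrier n Xs) (prod_ents n Xs Ents)) \<longrightarrow>
            normal_ballean (prod_carrier n Xs) (prod_ents n Xs Ents))"
proof (cases "prod_carrier n Xs = {}")
  case True
  then show ?thesis
    by (simp add: bornology_empty normal_ballean_empty has_linear_base_def)
next
  case False
  have b: "\<forall>i<n. ballean (Xs i) (Ents i)" and ub: "\<forall>i<n. unbounded (Xs i) (Ents i)"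
    using assms(2) by simp_all
  have "0 < n"
    using assms(1) by simp
  show ?thesis
    using has_linear_base_if_normal_prod[OF assms(1) b ub False]
      normal_prod_if_has_linear_base[OF \<open>0 < n\<close> b ub False] by blast
qed

end
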